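(* Let $G=(S,T,\pi)$ be a two-person win-lose game such that every set in $\mathcal{B}^1(G)$ is finite. Then the following are equivalent: (1) $\mathcal{B}^1_{\downarrow}(G)$ is ascending-union closed; (2) $\mathcal{B}^1_{\downarrow}(G)$ contains no countable strictly ascending chain $A_1\subsetneq A_2\subsetneq\cdots$; (3) $G$ is LNG-free.
   Context: A two-person win-lose game is a triple $G=(S,T,\pi)$ with non-empty sets $S,T$ and $\pi:S\times T\to\{0,1\}$. For $s\in S$, $B_s=\{t\in T:\pi(s,t)=1\}$, $\mathcal{B}^1(G)=\{B_s:s\in S\}$, $\mathcal{B}^1_{\downarrow}(G)=\{A\subseteq T:\exists s\in S,\ A\subseteq B_s\}$. A family $\mathcal{F}$ is ascending-union closed if $A_i\in\mathcal{F}$ ($i\ge1$) with $A_1\subset A_2\subset\cdots$ implies $\bigcup_iA_i\in\mathcal{F}$. The larger number game (LNG) is $(\mathbb{N},\mathbb{N},\pi)$ with $\pi(s,t)=1$ iff $s\ge t$. $G$ is LNG-free if there are no sequences of distinct $s_1,s_2,\ldots\in S$ and distinct $t_1,t_2,\ldots\in T$ with $\pi(s_i,t_j)=1\iff i\ge j$ (i.e., no subgame is isomorphic to LNG). *)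

theory Defs
  imports Main
begin

text \<open>A two-person win-lose game (S,T,pi): S, T nonempty sets (carriers in types 's, 't),
  payoff pi : S x T -> {0,1}, rendered as a boolean predicate (True = 1).\<close>

definition win_lose_game :: "'s set \<Rightarrow> 't set \<Rightarrow> ('s \<Rightarrow> 't \<Rightarrow> bool) \<Rightarrow> bool" where
  "win_lose_game S T pi \<longleftrightarrow> S \<noteq> {} \<and> T \<noteq> {}"

definition Bset :: "'t set \<Rightarrow> ('s \<Rightarrow> 't \<Rightarrow> bool) \<Rightarrow> 's \<Rightarrow> 't set" where
  "Bset T pi s = {t \<in> T. pi s t}"

definition B1 :: "'s set \<Rightarrow> 't set \<Rightarrow> ('s \<Rightarrow> 't \<Rightarrow> bool) \<Rightarrow> 't set set" where
  "B1 S T pi = (Bset T pi) ` S"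

definition B1_down :: "'s set \<Rightarrow> 't set \<Rightarrow> ('s \<Rightarrow> 't \<Rightarrow> bool) \<Rightarrow> 't set set" where
  "B1_down S T pi = {A. A \<subseteq> T \<and> (\<exists>s\<in>S. A \<subseteq> Bset T pi s)}"

definition ascending_union_closed :: "'a set set \<Rightarrow> bool" where
  "ascending_union_closed F \<longleftrightarrow>
     (\<forall>A :: nat \<Rightarrow> 'a set. (\<forall>i. A i \<in> F) \<and> (\<forall>i. A i \<subset> A (Suc i)) \<longrightarrow> (\<Union>i. A i) \<in> F)"

definition has_strict_ascending_chain :: "'a set set \<Rightarrow> bool" where
  "has_strict_ascending_chain F \<longleftrightarrow>
     (\<exists>A :: nat \<Rightarrow> 'a set. (\<forall>i. A i \<in> F) \<and> (\<forall>i. A i \<subset> A (Suc i)))"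

definition LNG_free :: "'s set \<Rightarrow> 't set \<Rightarrow> ('s \<Rightarrow> 't \<Rightarrow> bool) \<Rightarrow> bool" where
  "LNG_free S T pi \<longleftrightarrow>
     \<not> (\<exists>(s :: nat \<Rightarrow> 's) (t :: nat \<Rightarrow> 't).
          inj s \<and> range s \<subseteq> S \<and> inj t \<and> range t \<subseteq> T \<and>
          (\<forall>i j. pi (s i) (t j) \<longleftrightarrow> j \<le> i))"

end

theory Submission
  imports Defs
begin

text \<open>
  Members of \<open>B1_down\<close> are finite, whereas the union of a strict chain is infinite, so (1)
  holds exactly when there is no strict chain, i.e. (2).  An LNG subgame yields the strict chain
  \<open>{t\<^sub>0, ..., t\<^sub>i}\<close>.  Conversely, the union \<open>U\<close> of a strict chain is infinite and each of its
  finite subsets lies in some \<open>B\<^sub>s\<close>.  Since \<open>B\<^sub>s\<^sub>n\<close> is finite we can pick \<open>t\<^sub>n\<^sub>+\<^sub>1 \<in> U\<close> outside it,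
  and then \<open>s\<^sub>n\<^sub>+\<^sub>1\<close> with \<open>B\<^sub>s\<^sub>n\<^sub>+\<^sub>1\<close> containing \<open>t\<^sub>n\<^sub>+\<^sub>1\<close> and \<open>U \<inter> B\<^sub>s\<^sub>n\<close>; the sets \<open>U \<inter> B\<^sub>s\<^sub>n\<close>
  increase, so \<open>t\<^sub>j \<in> B\<^sub>s\<^sub>i\<close> iff \<open>j \<le> i\<close>.
\<close>

lemma strict_chain_Union_infinite:
  fixes A :: "nat \<Rightarrow> 'a set"
  assumes "\<And>i. A i \<subset> A (Suc i)"
  shows "infinite (\<Union>i. A i)"
proof
  assume "finite (\<Union>i. A i)"
  then have "finite (range A)"
    using finite_subset[of "range A" "Pow (\<Union>i. A i)"] by auto
  moreover have "inj A"
    using assms by (intro strict_mono_imp_inj_on) (simp add: strict_mono_Suc_iff)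
  ultimately show False
    by (simp add: finite_image_iff)
qed

lemma ascending_union_closed_iff_no_strict_chain:
  assumes "\<And>A. A \<in> F \<Longrightarrow> finite A"
  shows "ascending_union_closed F \<longleftrightarrow> \<not> has_strict_ascending_chain F"
  unfolding ascending_union_closed_def has_strict_ascending_chain_def
  using assms strict_chain_Union_infinite by blast

lemma finite_subset_Union_mono:
  fixes A :: "nat \<Rightarrow> 'a set"
  assumes "mono A" "finite F" "F \<subseteq> (\<Union>i. A i)"
  obtains n where "F \<subseteq> A n"
proof (rule finite_subset_Union_chain[of F "range A" UNIV])
  have "A i \<subseteq> A j \<or> A j \<subseteq> A i" for i j
    using nat_le_linear[of i j] monoD[OF \<open>mono A\<close>] by blast
  then show "subset.chain UNIV (range A)"
    by (auto simp: subset.chain_def)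
qed (use assms in auto)

lemma staircase_from_finite_covers:
  fixes B :: "'s \<Rightarrow> 't set"
  assumes "infinite U"
    and cover: "\<And>F. finite F \<Longrightarrow> F \<subseteq> U \<Longrightarrow> \<exists>s\<in>S. F \<subseteq> B s"
    and fin: "\<And>s. s \<in> S \<Longrightarrow> finite (B s)"
  obtains s :: "nat \<Rightarrow> 's" and t :: "nat \<Rightarrow> 't"
  where "range s \<subseteq> S" "range t \<subseteq> U" "\<And>i j. t j \<in> B (s i) \<longleftrightarrow> j \<le> i"
proof -
  define P :: "nat \<Rightarrow> 't \<times> 's \<Rightarrow> bool" where "P = (\<lambda>_ (t, s). s \<in> S \<and> t \<in> U \<inter> B s)"
  define Q :: "nat \<Rightarrow> 't \<times> 's \<Rightarrow> 't \<times> 's \<Rightarrow> bool"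
    where "Q = (\<lambda>_ (t, s) (t', s'). t' \<notin> B s \<and> U \<inter> B s \<subseteq> B s')"
  have "\<exists>f. \<forall>n. P n (f n) \<and> Q n (f n) (f (Suc n))"
  proof (rule dependent_nat_choice)
    obtain t0 where "t0 \<in> U"
      using infinite_imp_nonempty[OF \<open>infinite U\<close>] by blast
    moreover obtain s0 where "s0 \<in> S" "{t0} \<subseteq> B s0"
      using cover[of "{t0}"] \<open>t0 \<in> U\<close> by auto
    ultimately show "\<exists>x. P 0 x"
      by (auto simp: P_def)
  next
    fix n x assume "P n x"
    then obtain t s where x: "x = (t, s)" and "s \<in> S"
      by (auto simp: P_def)
    have "infinite (U - B s)"
      using \<open>infinite U\<close> fin[OF \<open>s \<in> S\<close>] by (simp add: Diff_infinite_finite)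
    then have "U - B s \<noteq> {}"
      by (rule infinite_imp_nonempty)
    then obtain t' where t': "t' \<in> U" "t' \<notin> B s"
      by blast
    obtain s' where "s' \<in> S" "insert t' (U \<inter> B s) \<subseteq> B s'"
      using cover[of "insert t' (U \<inter> B s)"] fin[OF \<open>s \<in> S\<close>] t' by auto
    then show "\<exists>y. P (Suc n) y \<and> Q n x y"
      using t' by (intro exI[of _ "(t', s')"]) (auto simp: P_def Q_def x)
  qed
  then obtain f where f: "\<And>n. P n (f n)" "\<And>n. Q n (f n) (f (Suc n))"
    by blast
  define s where "s n = snd (f n)" for n
  define t where "t n = fst (f n)" for n
  have s_t: "s n \<in> S" "t n \<in> U \<inter> B (s n)" for n
    using f(1)[of n] by (auto simp: P_def s_def t_def split: prod.splits)
  have next_t: "t (Suc n) \<notin> B (s n)" and next_s: "U \<inter> B (s n) \<subseteq> U \<inter> B (s (Suc n))" for n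
    using f(2)[of n] by (auto simp: Q_def s_def t_def split: prod.splits)
  have covered_mono: "U \<inter> B (s i) \<subseteq> U \<inter> B (s j)" if "i \<le> j" for i j
    using lift_Suc_mono_le[of "\<lambda>n. U \<inter> B (s n)", OF next_s that] .
  have "t j \<in> B (s i) \<longleftrightarrow> j \<le> i" for i j
  proof
    assume "t j \<in> B (s i)"
    show "j \<le> i"
    proof (rule ccontr)
      assume "\<not> j \<le> i"
      then obtain k where "j = Suc k" "i \<le> k"
        by (cases j) auto
      then show False
        using covered_mono[of i k] next_t[of k] s_t(2)[of j] \<open>t j \<in> B (s i)\<close> by auto
    qed
  qed (use covered_mono s_t in blast)
  then show thesis
    using s_t by (intro that[of s t]) auto
qed

lemma staircase_inj:
  fixes s :: "nat \<Rightarrow> 's" and t :: "nat \<Rightarrow> 't"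
  assumes "\<And>i j. R (s i) (t j) \<longleftrightarrow> j \<le> i"
  shows "inj s" "inj t"
proof -
  show "inj s"
  proof (rule linorder_injI)
    fix i k :: nat assume "i < k"
    then show "s i \<noteq> s k"
      using assms[of i k] assms[of k k] by auto
  qed
  show "inj t"
  proof (rule linorder_injI)
    fix i k :: nat assume "i < k"
    then show "t i \<noteq> t k"
      using assms[of i i] assms[of i k] by auto
  qed
qed

lemma finite_B1_down:
  assumes "\<forall>B \<in> B1 S T pi. finite B" "A \<in> B1_down S T pi"
  shows "finite A"
  using assms by (auto simp: B1_def B1_down_def intro: finite_subset)

lemma not_LNG_free_imp_strict_chain:
  fixes S :: "'s set" and T :: "'t set" and pi :: "'s \<Rightarrow> 't \<Rightarrow> bool"
  assumes "\<not> LNG_free S T pi"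
  shows "has_strict_ascending_chain (B1_down S T pi)"
proof -
  obtain s :: "nat \<Rightarrow> 's" and t :: "nat \<Rightarrow> 't"
    where "inj t" "range s \<subseteq> S" "range t \<subseteq> T" and st: "\<And>i j. pi (s i) (t j) \<longleftrightarrow> j \<le> i"
    using assms unfolding LNG_free_def by blast
  have "t ` {..i} \<in> B1_down S T pi" for i
    using \<open>range s \<subseteq> S\<close> \<open>range t \<subseteq> T\<close> st
    by (auto simp: B1_down_def Bset_def intro!: bexI[of _ "s i"])
  moreover have "t ` {..i} \<subset> t ` {..Suc i}" for i
  proof -
    have "t (Suc i) \<notin> t ` {..i}"
      using \<open>inj t\<close> by (simp add: inj_image_mem_iff)
    then show ?thesis
      by (auto simp: atMost_Suc)
  qed
  ultimately show ?thesis
    unfolding has_strict_ascending_chain_def by (intro exI[of _ "\<lambda>i. t ` {..i}"]) simp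
qed

lemma strict_chain_imp_not_LNG_free:
  fixes S :: "'s set" and T :: "'t set" and pi :: "'s \<Rightarrow> 't \<Rightarrow> bool"
  assumes "\<forall>B \<in> B1 S T pi. finite B" "has_strict_ascending_chain (B1_down S T pi)"
  shows "\<not> LNG_free S T pi"
proof -
  obtain A where A: "\<And>i. A i \<in> B1_down S T pi" and strict: "\<And>i. A i \<subset> A (Suc i)"
    using assms(2) unfolding has_strict_ascending_chain_def by blast
  define U where "U = (\<Union>i. A i)"
  have "U \<subseteq> T"
    using A by (auto simp: U_def B1_down_def)
  have "mono A"
    using strict by (intro strict_mono_mono) (simp add: strict_mono_Suc_iff)
  have cover: "\<exists>s\<in>S. F \<subseteq> Bset T pi s" if F: "finite F" "F \<subseteq> U" for F
  proof -
    obtain n where "F \<subseteq> A n"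
      using finite_subset_Union_mono[OF \<open>mono A\<close> F[unfolded U_def]] by blast
    then show ?thesis
      using A[of n] by (auto simp: B1_down_def)
  qed
  have fin: "finite (Bset T pi s)" if "s \<in> S" for s
    using assms(1) that by (auto simp: B1_def)
  have "infinite U"
    unfolding U_def using strict by (rule strict_chain_Union_infinite)
  obtain s :: "nat \<Rightarrow> 's" and t :: "nat \<Rightarrow> 't"
    where "range s \<subseteq> S" "range t \<subseteq> U" and st: "\<And>i j. t j \<in> Bset T pi (s i) \<longleftrightarrow> j \<le> i"
    using staircase_from_finite_covers[OF \<open>infinite U\<close> cover fin] by blast
  have "range t \<subseteq> T"
    using \<open>range t \<subseteq> U\<close> \<open>U \<subseteq> T\<close> by blast
  then have staircase: "pi (s i) (t j) \<longleftrightarrow> j \<le> i" for i j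
    using st[of j i] by (auto simp: Bset_def)
  then have "inj s" "inj t"
    by (rule staircase_inj)+
  then show ?thesis
    unfolding LNG_free_def not_not
    using \<open>range s \<subseteq> S\<close> \<open>range t \<subseteq> T\<close> staircase
    by (intro exI[of _ s] exI[of _ t]) simp
qed

theorem proposition2p9:
  fixes S :: "'s set" and T :: "'t set" and pi :: "'s \<Rightarrow> 't \<Rightarrow> bool"
  assumes "win_lose_game S T pi"
    and "\<forall>B \<in> B1 S T pi. finite B"
  shows "(ascending_union_closed (B1_down S T pi) \<longleftrightarrow> \<not> has_strict_ascending_chain (B1_down S T pi))
       \<and> (\<not> has_strict_ascending_chain (B1_down S T pi) \<longleftrightarrow> LNG_free S T pi)"
  using ascending_union_closed_iff_no_strict_chain[OF finite_B1_down[OF assms(2)]]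
    not_LNG_free_imp_strict_chain strict_chain_imp_not_LNG_free[OF assms(2)]
  by blast

end
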